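(* Let $\ell$ be an odd prime. Then every $\underline{\mathbb Z/\ell}$-module is a direct sum of copies of $H$ and $S_\Theta$. Moreover, every $\underline{\mathbb Z/\ell}$-module is projective and every short exact sequence of $\underline{\mathbb Z/\ell}$-modules splits.
   Context: A $C_2$-Mackey functor $M$ consists of abelian groups $M_\Theta,M_\bullet$ with homomorphisms $t\colon M_\Theta\to M_\Theta$, $p^*\colon M_\bullet\to M_\Theta$, $p_*\colon M_\Theta\to M_\bullet$ satisfying $tp^*=p^*$, $p_*t=p_*$, $t^2=1$, $p^*p_*=1+t$. A $\underline{\mathbb Z/\ell}$-module (module over the constant Mackey ring $\underline{\mathbb Z/\ell}$) is exactly a Mackey functor with $\ell M_\Theta=0$, $\ell M_\bullet=0$ and $p_*p^*=2$. Here $H=\underline{\mathbb Z/\ell}$ is the module with $H_\Theta=H_\bullet=\mathbb Z/\ell$, $p^*=t=\mathrm{id}$, $p_*=2$, and $S_\Theta$ is the module with $(S_\Theta)_\Theta=\mathbb Z/\ell$, $t=-1$, and $(S_\Theta)_\bullet=0$. *)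

theory Defs
  imports "HOL-Algebra.Algebra" "HOL-Computational_Algebra.Primes"
begin

text \<open>The abelian groups M_Theta and M_bullet are HOL-Algebra
  (commutative) groups, written multiplicatively: the group law of the abelian group
  is the monoid multiplication, 0 is the unit, and n*x is x [^] n.\<close>

record ('a, 'b) mackey =
  theta :: "'a monoid"
  bullet :: "'b monoid"
  tw :: "'a \<Rightarrow> 'a"
  res :: "'b \<Rightarrow> 'a"
  tr :: "'a \<Rightarrow> 'b"

definition is_mackey :: "('a, 'b) mackey \<Rightarrow> bool" where
  "is_mackey M \<longleftrightarrow>
     comm_group (theta M) \<and> comm_group (bullet M) \<and>
     tw M \<in> hom (theta M) (theta M) \<and>
     res M \<in> hom (bullet M) (theta M) \<and>
     tr M \<in> hom (theta M) (bullet M) \<and>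
     (\<forall>y \<in> carrier (bullet M). tw M (res M y) = res M y) \<and>
     (\<forall>x \<in> carrier (theta M). tr M (tw M x) = tr M x) \<and>
     (\<forall>x \<in> carrier (theta M). tw M (tw M x) = x) \<and>
     (\<forall>x \<in> carrier (theta M). res M (tr M x) = x \<otimes>\<^bsub>theta M\<^esub> tw M x)"

definition zl_module :: "nat \<Rightarrow> ('a, 'b) mackey \<Rightarrow> bool" where
  "zl_module l M \<longleftrightarrow> is_mackey M \<and>
     (\<forall>x \<in> carrier (theta M). x [^]\<^bsub>theta M\<^esub> l = \<one>\<^bsub>theta M\<^esub>) \<and>
     (\<forall>y \<in> carrier (bullet M). y [^]\<^bsub>bullet M\<^esub> l = \<one>\<^bsub>bullet M\<^esub>) \<and>
     (\<forall>y \<in> carrier (bullet M). tr M (res M y) = y \<otimes>\<^bsub>bullet M\<^esub> y)"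

definition mackey_hom ::
  "('a, 'b) mackey \<Rightarrow> ('c, 'd) mackey \<Rightarrow> ('a \<Rightarrow> 'c) \<times> ('b \<Rightarrow> 'd) \<Rightarrow> bool" where
  "mackey_hom M N f \<longleftrightarrow>
     fst f \<in> hom (theta M) (theta N) \<and> snd f \<in> hom (bullet M) (bullet N) \<and>
     (\<forall>x \<in> carrier (theta M). fst f (tw M x) = tw N (fst f x)) \<and>
     (\<forall>y \<in> carrier (bullet M). fst f (res M y) = res N (snd f y)) \<and>
     (\<forall>x \<in> carrier (theta M). snd f (tr M x) = tr N (fst f x))"

definition mackey_iso ::
  "('a, 'b) mackey \<Rightarrow> ('c, 'd) mackey \<Rightarrow> ('a \<Rightarrow> 'c) \<times> ('b \<Rightarrow> 'd) \<Rightarrow> bool" where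
  "mackey_iso M N f \<longleftrightarrow> mackey_hom M N f \<and>
     fst f \<in> iso (theta M) (theta N) \<and> snd f \<in> iso (bullet M) (bullet N)"

definition mackey_isomorphic :: "('a, 'b) mackey \<Rightarrow> ('c, 'd) mackey \<Rightarrow> bool" where
  "mackey_isomorphic M N \<longleftrightarrow> (\<exists>f. mackey_iso M N f)"

definition mackey_sum :: "'i set \<Rightarrow> ('i \<Rightarrow> ('a, 'b) mackey) \<Rightarrow> ('i \<Rightarrow> 'a, 'i \<Rightarrow> 'b) mackey" where
  "mackey_sum I F =
     \<lparr> theta = sum_group I (\<lambda>i. theta (F i)),
       bullet = sum_group I (\<lambda>i. bullet (F i)),
       tw = (\<lambda>x. \<lambda>i\<in>I. tw (F i) (x i)),
       res = (\<lambda>y. \<lambda>i\<in>I. res (F i) (y i)),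
       tr = (\<lambda>x. \<lambda>i\<in>I. tr (F i) (x i)) \<rparr>"

definition zmod_group :: "nat \<Rightarrow> int monoid" where
  "zmod_group l = \<lparr> carrier = {0..<int l}, monoid.mult = (\<lambda>x y. (x + y) mod int l), one = 0 \<rparr>"

definition trivial_group :: "int monoid" where
  "trivial_group = \<lparr> carrier = {0}, monoid.mult = (\<lambda>x y. 0), one = 0 \<rparr>"

definition H_mackey :: "nat \<Rightarrow> (int, int) mackey" where
  "H_mackey l = \<lparr> theta = zmod_group l, bullet = zmod_group l,
     tw = (\<lambda>x. x), res = (\<lambda>y. y), tr = (\<lambda>x. (2 * x) mod int l) \<rparr>"

definition S_mackey :: "nat \<Rightarrow> (int, int) mackey" where
  "S_mackey l = \<lparr> theta = zmod_group l, bullet = trivial_group,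
     tw = (\<lambda>x. (- x) mod int l), res = (\<lambda>y. 0), tr = (\<lambda>x. 0) \<rparr>"

text \<open>M is (isomorphic to) a direct sum of copies of H and S_Theta. The index set is
  taken inside the type 'a + 'b, which is large enough for any decomposition of M.\<close>

definition sum_of_H_S :: "nat \<Rightarrow> ('a, 'b) mackey \<Rightarrow> bool" where
  "sum_of_H_S l M \<longleftrightarrow>
     (\<exists>(I :: ('a + 'b) set) F. (\<forall>i \<in> I. F i = H_mackey l \<or> F i = S_mackey l) \<and>
        mackey_isomorphic M (mackey_sum I F))"

definition mackey_surj :: "('a, 'b) mackey \<Rightarrow> ('c, 'd) mackey \<Rightarrow> ('a \<Rightarrow> 'c) \<times> ('b \<Rightarrow> 'd) \<Rightarrow> bool" where
  "mackey_surj M N f \<longleftrightarrow>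
     fst f ` carrier (theta M) = carrier (theta N) \<and> snd f ` carrier (bullet M) = carrier (bullet N)"

definition mackey_inj :: "('a, 'b) mackey \<Rightarrow> ('a \<Rightarrow> 'c) \<times> ('b \<Rightarrow> 'd) \<Rightarrow> bool" where
  "mackey_inj M f \<longleftrightarrow> inj_on (fst f) (carrier (theta M)) \<and> inj_on (snd f) (carrier (bullet M))"

definition mackey_exact_at ::
  "('a, 'b) mackey \<Rightarrow> ('c, 'd) mackey \<Rightarrow> ('e, 'f) mackey \<Rightarrow>
   ('a \<Rightarrow> 'c) \<times> ('b \<Rightarrow> 'd) \<Rightarrow> ('c \<Rightarrow> 'e) \<times> ('d \<Rightarrow> 'f) \<Rightarrow> bool" where
  "mackey_exact_at A B C f g \<longleftrightarrow>
     fst f ` carrier (theta A) = kernel (theta B) (theta C) (fst g) \<and>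
     snd f ` carrier (bullet A) = kernel (bullet B) (bullet C) (snd g)"

definition short_exact ::
  "('a, 'b) mackey \<Rightarrow> ('c, 'd) mackey \<Rightarrow> ('e, 'f) mackey \<Rightarrow>
   ('a \<Rightarrow> 'c) \<times> ('b \<Rightarrow> 'd) \<Rightarrow> ('c \<Rightarrow> 'e) \<times> ('d \<Rightarrow> 'f) \<Rightarrow> bool" where
  "short_exact A B C f g \<longleftrightarrow> mackey_hom A B f \<and> mackey_hom B C g \<and>
     mackey_inj A f \<and> mackey_exact_at A B C f g \<and> mackey_surj B C g"

definition ses_splits ::
  "('c, 'd) mackey \<Rightarrow> ('e, 'f) mackey \<Rightarrow> ('c \<Rightarrow> 'e) \<times> ('d \<Rightarrow> 'f) \<Rightarrow> bool" where
  "ses_splits B C g \<longleftrightarrow> (\<exists>s. mackey_hom C B s \<and>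
     (\<forall>z \<in> carrier (theta C). fst g (fst s z) = z) \<and>
     (\<forall>z \<in> carrier (bullet C). snd g (snd s z) = z))"

definition lifts_through ::
  "('a, 'b) mackey \<Rightarrow> ('c, 'd) mackey \<Rightarrow> ('a \<Rightarrow> 'e) \<times> ('b \<Rightarrow> 'f) \<Rightarrow> ('c \<Rightarrow> 'e) \<times> ('d \<Rightarrow> 'f) \<Rightarrow> bool" where
  "lifts_through M N f g \<longleftrightarrow> (\<exists>h. mackey_hom M N h \<and>
     (\<forall>x \<in> carrier (theta M). fst g (fst h x) = fst f x) \<and>
     (\<forall>y \<in> carrier (bullet M). snd g (snd h y) = snd f y))"

end

theory Submission
  imports Defs
begin

text \<open>Since l is odd, 2 is invertible mod l. Hence for a Z/l-module M the group M_Theta is the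
  internal direct sum of its minus part {x. t x = -x}, on which p_* vanishes, and of the image of
  the injective map p^*. Both the minus part and M_bullet are vector spaces over F_l; by Zorn's
  lemma they have bases. Sending the generator of a copy of S_Theta to a basis vector of the minus
  part and the generator of H_bullet in a copy of H to a basis vector of M_bullet identifies a sum
  of copies of S_Theta and H with M.

  A morphism out of such a sum may send these generators to arbitrary elements of the minus part,
  resp. of the bullet level, of the target. An epimorphism g : N \<rightarrow> P is surjective on minus
  parts (lift, take the minus projection x - t x, and halve), so the generators of the
  decomposition of P lift along g, and the induced morphism is a section of g. This gives both the
  splitting of short exact sequences and the projectivity of every module.\<close>

section \<open>Groups of exponent l and finite products\<close>

context group
begin

lemma int_pow_mod_exponent:
  assumes x: "x \<in> carrier G" and exp: "x [^] (l::nat) = \<one>"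
  shows "x [^] (i mod int l) = x [^] (i::int)"
proof -
  have "ord x dvd l" using pow_eq_id[OF x] exp by blast
  moreover have "int l dvd i - i mod int l" by (simp add: minus_mod_eq_mult_div)
  ultimately show ?thesis
    using int_pow_eq[OF x] by (meson dvd_trans int_dvd_int_iff)
qed

lemma pow_half_square:
  assumes x: "x \<in> carrier G" and exp: "x [^] (l::nat) = \<one>" and "odd l"
  shows "(x \<otimes> x) [^] ((int l + 1) div 2) = x"
proof -
  have two_half: "2 * ((int l + 1) div 2) = int l + 1" using \<open>odd l\<close> by (auto elim!: oddE)
  have "x \<otimes> x = x [^] (2::int)" using int_pow_mult[OF x, of 1 1] x by simp
  then have "(x \<otimes> x) [^] ((int l + 1) div 2) = x [^] (int l + 1)"
    using x two_half by (simp add: int_pow_pow)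
  also have "\<dots> = x" using x exp by (simp add: int_pow_mult int_pow_int)
  finally show ?thesis .
qed

lemma square_eq_one_imp_eq_one:
  assumes x: "x \<in> carrier G" and exp: "x [^] (l::nat) = \<one>" and "odd l" and "x \<otimes> x = \<one>"
  shows "x = \<one>"
  using pow_half_square[OF assms(1-3)] \<open>x \<otimes> x = \<one>\<close> by simp

end

context comm_group
begin

lemma finprod_int_pow:
  assumes "finite S" "f \<in> S \<rightarrow> carrier G"
  shows "(finprod G f S) [^] (n::int) = finprod G (\<lambda>i. f i [^] n) S"
  using assms
proof (induction S rule: finite_induct)
  case (insert x F)
  then have "(\<lambda>i. f i [^] n) \<in> F \<rightarrow> carrier G" by auto
  with insert show ?case by (simp add: int_pow_distrib)
qed simp

lemma subgroup_finprod:
  assumes H: "subgroup H G" and "finite S" "f \<in> S \<rightarrow> H"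
  shows "finprod G f S \<in> H"
  using assms(2,3)
proof (induction S rule: finite_induct)
  case (insert x F)
  then have "f \<in> F \<rightarrow> carrier G" "f x \<in> carrier G" using subgroup.subset[OF H] by auto
  with insert show ?case by (simp add: subgroup.m_closed[OF H])
qed (simp add: subgroup.one_closed[OF H])

lemma gfinprod_eq_finprod_superset:
  assumes "finite S" "S \<subseteq> I" "\<And>i. i \<in> I - S \<Longrightarrow> f i = \<one>" "f \<in> I \<rightarrow> carrier G"
  shows "gfinprod G f I = finprod G f S"
proof -
  have "gfinprod G f I = gfinprod G f S"
    by (rule gfinprod_mono_neutral_cong_left[symmetric]) (use assms in auto)
  also have "\<dots> = finprod G f S"
    using assms by (intro gfinprod_eq_finprod) auto
  finally show ?thesis .
qed

lemma gfinprod_Inl_Inr: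
  assumes f: "f \<in> I \<rightarrow> carrier G" and "finite S" "finite T"
    and sub: "Inl ` S \<union> Inr ` T \<subseteq> I"
    and one: "\<And>i. i \<in> I - (Inl ` S \<union> Inr ` T) \<Longrightarrow> f i = \<one>"
  shows "gfinprod G f I = finprod G (\<lambda>a. f (Inl a)) S \<otimes> finprod G (\<lambda>b. f (Inr b)) T"
proof -
  have "gfinprod G f I = finprod G f (Inl ` S \<union> Inr ` T)"
    by (rule gfinprod_eq_finprod_superset) (use assms in auto)
  also have "\<dots> = finprod G f (Inl ` S) \<otimes> finprod G f (Inr ` T)"
    by (rule finprod_Un_disjoint) (use assms in auto)
  also have "finprod G f (Inl ` S) = finprod G (\<lambda>a. f (Inl a)) S"
    by (rule finprod_reindex) (use sub f in auto)
  also have "finprod G f (Inr ` T) = finprod G (\<lambda>b. f (Inr b)) T"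
    by (rule finprod_reindex) (use sub f in auto)
  finally show ?thesis .
qed

end

lemma hom_finprod:
  assumes G: "comm_group G" and H: "comm_group H" and h: "h \<in> hom G H"
    and "finite S" "f \<in> S \<rightarrow> carrier G"
  shows "h (finprod G f S) = finprod H (\<lambda>i. h (f i)) S"
proof -
  interpret G: comm_group G by fact
  interpret H: comm_group H by fact
  interpret group_hom G H h
    by (simp add: group_hom_def group_hom_axioms_def G.is_group H.is_group h)
  show ?thesis
    using assms(4,5)
  proof (induction S rule: finite_induct)
    case (insert x F)
    have "(\<lambda>i. h (f i)) \<in> F \<rightarrow> carrier H" using insert hom_closed by (auto simp: Pi_def)
    with insert show ?case by simp
  qed simp
qed

lemma hom_gfinprod:
  assumes G: "comm_group G" and H: "comm_group H" and h: "h \<in> hom G H"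
    and f: "f \<in> I \<rightarrow> carrier G" and fin: "finite {i \<in> I. f i \<noteq> \<one>\<^bsub>G\<^esub>}"
  shows "h (gfinprod G f I) = gfinprod H (\<lambda>i. h (f i)) I"
proof -
  interpret G: comm_group G by fact
  interpret H: comm_group H by fact
  interpret group_hom G H h
    by (simp add: group_hom_def group_hom_axioms_def G.is_group H.is_group h)
  let ?S = "{i \<in> I. f i \<noteq> \<one>\<^bsub>G\<^esub>}"
  have "gfinprod G f I = finprod G f ?S"
    by (rule G.gfinprod_eq_finprod_superset) (use fin f in auto)
  moreover have "gfinprod H (\<lambda>i. h (f i)) I = finprod H (\<lambda>i. h (f i)) ?S"
    by (rule H.gfinprod_eq_finprod_superset) (use fin f hom_closed in \<open>auto simp: Pi_def\<close>)
  ultimately show ?thesis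
    using hom_finprod[OF G H h fin] f by auto
qed

lemma finite_support_pow:
  assumes "finite {i \<in> I. x i \<noteq> (0::int)}"
  shows "finite {i \<in> I. w i [^]\<^bsub>G\<^esub> x i \<noteq> \<one>\<^bsub>G\<^esub>}"
  by (rule finite_subset[OF _ assms]) auto

lemma hom_bij_betwI:
  assumes "group G" "group H" "h \<in> hom G H"
    and ker: "\<And>x. x \<in> carrier G \<Longrightarrow> h x = \<one>\<^bsub>H\<^esub> \<Longrightarrow> x = \<one>\<^bsub>G\<^esub>"
    and surj: "\<And>z. z \<in> carrier H \<Longrightarrow> \<exists>x\<in>carrier G. h x = z"
  shows "bij_betw h (carrier G) (carrier H)"
proof -
  interpret group_hom G H h
    using assms by (simp add: group_hom_def group_hom_axioms_def)
  have "kernel G H h = {\<one>\<^bsub>G\<^esub>}"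
    using ker by (auto simp: kernel_def)
  then have "inj_on h (carrier G)" using inj_iff_trivial_ker by simp
  moreover have "h ` carrier G = carrier H" using surj by force
  ultimately show ?thesis by (simp add: bij_betw_def)
qed

lemma int_dvd_in_range_eq_0: "int l dvd k \<Longrightarrow> k \<in> {0..<int l} \<Longrightarrow> k = 0"
  by (metis atLeastLessThan_iff dvd_imp_mod_0 mod_pos_pos_trivial)

section \<open>Bases of groups of prime exponent\<close>

definition indep_mod :: "('a, 'm) monoid_scheme \<Rightarrow> nat \<Rightarrow> 'a set \<Rightarrow> bool" where
  "indep_mod G l B \<longleftrightarrow> (\<forall>S c. finite S \<longrightarrow> S \<subseteq> B \<longrightarrow>
      finprod G (\<lambda>b. b [^]\<^bsub>G\<^esub> (c b :: int)) S = \<one>\<^bsub>G\<^esub> \<longrightarrow> (\<forall>b\<in>S. int l dvd c b))"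

definition int_span :: "('a, 'm) monoid_scheme \<Rightarrow> 'a set \<Rightarrow> 'a set" where
  "int_span G B = {finprod G (\<lambda>b. b [^]\<^bsub>G\<^esub> (c b :: int)) S | S c. finite S \<and> S \<subseteq> B}"

lemma int_spanI:
  "finite S \<Longrightarrow> S \<subseteq> B \<Longrightarrow> finprod G (\<lambda>b. b [^]\<^bsub>G\<^esub> (c b :: int)) S \<in> int_span G B"
  unfolding int_span_def by blast

lemma int_spanE:
  assumes "z \<in> int_span G B"
  obtains S c where "finite S" "S \<subseteq> B" "z = finprod G (\<lambda>b. b [^]\<^bsub>G\<^esub> (c b :: int)) S"
  using assms unfolding int_span_def by blast

lemma indep_modD:
  "indep_mod G l B \<Longrightarrow> finite S \<Longrightarrow> S \<subseteq> B \<Longrightarrow> finprod G (\<lambda>b. b [^]\<^bsub>G\<^esub> (c b :: int)) S = \<one>\<^bsub>G\<^esub>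
    \<Longrightarrow> b \<in> S \<Longrightarrow> int l dvd c b"
  unfolding indep_mod_def by blast

context comm_group
begin

lemma int_span_int_pow:
  assumes B: "B \<subseteq> carrier G" and z: "z \<in> int_span G B"
  shows "z [^] (k::int) \<in> int_span G B"
proof -
  obtain S c where S: "finite S" "S \<subseteq> B" and z_eq: "z = finprod G (\<lambda>b. b [^] (c b :: int)) S"
    using z by (rule int_spanE)
  have "z [^] k = finprod G (\<lambda>b. (b [^] c b) [^] k) S"
    unfolding z_eq using S B by (intro finprod_int_pow) auto
  also have "\<dots> = finprod G (\<lambda>b. b [^] (c b * k)) S"
    using S B by (intro finprod_cong) (auto simp: int_pow_pow simp_implies_def)
  finally show ?thesis using int_spanI[OF S] by simp
qed

lemma in_int_span_if_pow_in_int_span: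
  assumes "Factorial_Ring.prime l" and B: "B \<subseteq> carrier G"
    and v: "v \<in> carrier G" "v [^] l = \<one>" and "\<not> int l dvd k" and vk: "v [^] (k::int) \<in> int_span G B"
  shows "v \<in> int_span G B"
proof -
  have "Factorial_Ring.prime (int l)" using \<open>Factorial_Ring.prime l\<close> by simp
  then have "coprime k (int l)"
    using \<open>\<not> int l dvd k\<close> prime_imp_coprime coprime_commute by blast
  then obtain u w where uw: "u * k + w * int l = 1"
    using bezout_int by (metis coprime_iff_gcd_eq_1)
  have vl: "v [^] (w * int l) = \<one>" using int_pow_mod_exponent[OF v, of "w * int l"] by simp
  have "v = v [^] (u * k + w * int l)" using uw v by simp
  also have "\<dots> = (v [^] k) [^] u"
    using v vl by (simp add: int_pow_mult int_pow_pow mult.commute)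
  finally show ?thesis using int_span_int_pow[OF B vk, of u] by simp
qed

lemma indep_mod_insert:
  assumes l: "Factorial_Ring.prime l" and exp: "\<forall>x\<in>carrier G. x [^] l = \<one>"
    and B: "B \<subseteq> carrier G" "indep_mod G l B"
    and v: "v \<in> carrier G" "v \<notin> int_span G B"
  shows "indep_mod G l (insert v B)"
  unfolding indep_mod_def
proof (intro allI impI)
  fix S c assume S: "finite S" "S \<subseteq> insert v B"
    and prod_one: "finprod G (\<lambda>b. b [^] (c b :: int)) S = \<one>"
  let ?P = "finprod G (\<lambda>b. b [^] (c b :: int)) (S - {v})"
  have S': "finite (S - {v})" "S - {v} \<subseteq> B" using S by auto
  have P: "?P \<in> carrier G" using S' B by (intro finprod_closed) auto
  show "\<forall>b\<in>S. int l dvd c b"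
  proof (cases "v \<in> S")
    case False
    then show ?thesis using S prod_one indep_modD[OF B(2)] by blast
  next
    case True
    have "finprod G (\<lambda>b. b [^] (c b :: int)) (insert v (S - {v})) = v [^] c v \<otimes> ?P"
      using S' B v by (intro finprod_insert) auto
    then have vP: "v [^] c v \<otimes> ?P = \<one>"
      using True prod_one by (simp add: insert_absorb)
    then have "v [^] c v = ?P [^] (-1::int)"
      using v P by (simp add: int_pow_neg inv_equality)
    then have "v [^] c v \<in> int_span G B"
      using int_span_int_pow[OF B(1) int_spanI[OF S']] by simp
    then have dvd_v: "int l dvd c v"
      using in_int_span_if_pow_in_int_span[OF l B(1) v(1)] exp v by blast
    then have "v [^] c v = \<one>"
      using int_pow_mod_exponent[of v l "c v"] exp v by simp
    then have "?P = \<one>" using vP P by simp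
    then have "\<forall>b\<in>S - {v}. int l dvd c b" using indep_modD[OF B(2) S'] by blast
    then show ?thesis using dvd_v by blast
  qed
qed

lemma indep_mod_Union_chain:
  assumes "subset.chain {B. indep_mod G l B} C"
  shows "indep_mod G l (\<Union>C)"
  unfolding indep_mod_def
proof (intro allI impI)
  fix S c assume S: "finite S" "S \<subseteq> \<Union>C"
    and prod_one: "finprod G (\<lambda>b. b [^] (c b :: int)) S = \<one>"
  show "\<forall>b\<in>S. int l dvd c b"
  proof (cases "S = {}")
    case False
    then have "C \<noteq> {}" using S by auto
    then obtain B where "B \<in> C" "S \<subseteq> B"
      using finite_subset_Union_chain[OF S _ assms] by blast
    then show ?thesis using assms S prod_one by (auto simp: subset.chain_def indep_mod_def)
  qed simp
qed

lemma exists_basis: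
  assumes l: "Factorial_Ring.prime l" and exp: "\<forall>x\<in>carrier G. x [^] l = \<one>"
    and V: "subgroup V G"
  shows "\<exists>B \<subseteq> V. indep_mod G l B \<and> V \<subseteq> int_span G B"
proof -
  have V_carrier: "V \<subseteq> carrier G" using V by (rule subgroup.subset)
  define \<B> where "\<B> = {B. B \<subseteq> V \<and> indep_mod G l B}"
  have "\<exists>B\<in>\<B>. \<forall>B'\<in>\<B>. B \<subseteq> B' \<longrightarrow> B' = B"
  proof (rule subset_Zorn')
    fix C assume C: "subset.chain \<B> C"
    then have "subset.chain {B. indep_mod G l B} C"
      by (auto simp: subset.chain_def \<B>_def)
    with C show "\<Union>C \<in> \<B>"
      by (auto simp: \<B>_def subset.chain_def intro: indep_mod_Union_chain)
  qed
  then obtain B where B: "B \<subseteq> V" "indep_mod G l B" and max: "\<And>B'. B' \<in> \<B> \<Longrightarrow> B \<subseteq> B' \<Longrightarrow> B' = B"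
    by (auto simp: \<B>_def)
  have "v \<in> int_span G B" if v: "v \<in> V" for v
  proof (rule ccontr)
    assume "v \<notin> int_span G B"
    then have "indep_mod G l (insert v B)"
      using indep_mod_insert[OF l exp _ B(2)] B(1) v V_carrier by blast
    then have "v \<in> B" using max[of "insert v B"] B(1) v by (auto simp: \<B>_def)
    then have "finprod G (\<lambda>b. b [^] (1::int)) {v} \<in> int_span G B"
      by (intro int_spanI) auto
    then show False using \<open>v \<notin> int_span G B\<close> v V_carrier by auto
  qed
  with B show ?thesis by blast
qed

end

section \<open>The Mackey functors H and S_Theta and their sums\<close>

lemma zmod_comm_group: "0 < l \<Longrightarrow> comm_group (zmod_group l)"
proof (rule comm_groupI)
  fix x assume "0 < l" "x \<in> carrier (zmod_group l)"
  then have "(- x) mod int l \<in> carrier (zmod_group l) \<and>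
      (- x) mod int l \<otimes>\<^bsub>zmod_group l\<^esub> x = \<one>\<^bsub>zmod_group l\<^esub>"
    by (simp add: zmod_group_def mod_add_left_eq)
  then show "\<exists>y\<in>carrier (zmod_group l). y \<otimes>\<^bsub>zmod_group l\<^esub> x = \<one>\<^bsub>zmod_group l\<^esub>" by blast
qed (auto simp: zmod_group_def mod_add_left_eq mod_add_right_eq ac_simps)

lemma trivial_comm_group: "comm_group trivial_group"
  by (rule comm_groupI) (auto simp: trivial_group_def)

lemma carrier_zmod_group [simp]: "carrier (zmod_group l) = {0..<int l}"
  and one_zmod_group [simp]: "\<one>\<^bsub>zmod_group l\<^esub> = 0"
  and mult_zmod_group [simp]: "x \<otimes>\<^bsub>zmod_group l\<^esub> y = (x + y) mod int l"
  by (simp_all add: zmod_group_def)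

lemma carrier_trivial_group [simp]: "carrier trivial_group = {0}"
  and one_trivial_group [simp]: "\<one>\<^bsub>trivial_group\<^esub> = 0"
  and mult_trivial_group [simp]: "x \<otimes>\<^bsub>trivial_group\<^esub> y = 0"
  by (simp_all add: trivial_group_def)

lemma S_mackey_simps [simp]:
  "theta (S_mackey l) = zmod_group l" "bullet (S_mackey l) = trivial_group"
  "tw (S_mackey l) = (\<lambda>x. (- x) mod int l)" "res (S_mackey l) = (\<lambda>y. 0)" "tr (S_mackey l) = (\<lambda>x. 0)"
  by (simp_all add: S_mackey_def)

lemma H_mackey_simps [simp]:
  "theta (H_mackey l) = zmod_group l" "bullet (H_mackey l) = zmod_group l"
  "tw (H_mackey l) = (\<lambda>x. x)" "res (H_mackey l) = (\<lambda>y. y)" "tr (H_mackey l) = (\<lambda>x. (2 * x) mod int l)"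
  by (simp_all add: H_mackey_def)

lemma mackey_sum_simps [simp]:
  "theta (mackey_sum I F) = sum_group I (\<lambda>i. theta (F i))"
  "bullet (mackey_sum I F) = sum_group I (\<lambda>i. bullet (F i))"
  "tw (mackey_sum I F) = (\<lambda>x. \<lambda>i\<in>I. tw (F i) (x i))"
  "res (mackey_sum I F) = (\<lambda>y. \<lambda>i\<in>I. res (F i) (y i))"
  "tr (mackey_sum I F) = (\<lambda>x. \<lambda>i\<in>I. tr (F i) (x i))"
  by (simp_all add: mackey_sum_def)

definition SH_family :: "nat \<Rightarrow> 'p + 'q \<Rightarrow> (int, int) mackey" where
  "SH_family l i = (case i of Inl _ \<Rightarrow> S_mackey l | Inr _ \<Rightarrow> H_mackey l)"

lemma SH_family_Inl [simp]: "SH_family l (Inl a) = S_mackey l"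
  and SH_family_Inr [simp]: "SH_family l (Inr b) = H_mackey l"
  by (simp_all add: SH_family_def)

lemma theta_SH_family [simp]: "theta (SH_family l i) = zmod_group l"
  by (cases i) simp_all

lemma one_bullet_SH_family [simp]: "\<one>\<^bsub>bullet (SH_family l i)\<^esub> = 0"
  by (cases i) simp_all

lemma group_bullet_SH_family: "0 < l \<Longrightarrow> group (bullet (SH_family l i))"
  by (cases i) (simp_all add: trivial_comm_group zmod_comm_group comm_group.axioms(2))

lemma group_zmod_group: "0 < l \<Longrightarrow> group (zmod_group l)"
  by (simp add: zmod_comm_group comm_group.axioms(2))

lemma carrier_sum_zmod_group:
  "0 < l \<Longrightarrow> carrier (sum_group I (\<lambda>i. zmod_group l)) =
     {x \<in> \<Pi>\<^sub>E i\<in>I. {0..<int l}. finite {i \<in> I. x i \<noteq> 0}}"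
  by (simp add: carrier_sum_group group_zmod_group)

lemma carrier_sum_bullet_SH_family:
  "0 < l \<Longrightarrow> carrier (sum_group I (\<lambda>i. bullet (SH_family l i))) =
     {y \<in> \<Pi>\<^sub>E i\<in>I. carrier (bullet (SH_family l i)). finite {i \<in> I. y i \<noteq> 0}}"
  by (simp add: carrier_sum_group group_bullet_SH_family)

lemma sum_group_map_closed:
  assumes "\<And>i. i \<in> I \<Longrightarrow> group (G i)" "\<And>i. i \<in> I \<Longrightarrow> group (G' i)"
    and "\<And>i. i \<in> I \<Longrightarrow> f i \<in> carrier (G i) \<rightarrow> carrier (G' i)"
    and "\<And>i. i \<in> I \<Longrightarrow> f i \<one>\<^bsub>G i\<^esub> = \<one>\<^bsub>G' i\<^esub>"
  shows "(\<lambda>x. \<lambda>i\<in>I. f i (x i)) \<in> carrier (sum_group I G) \<rightarrow> carrier (sum_group I G')"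
proof
  fix x assume x: "x \<in> carrier (sum_group I G)"
  have "finite {i \<in> I. x i \<noteq> \<one>\<^bsub>G i\<^esub>}" using x assms(1) by (simp add: carrier_sum_group)
  then have "finite {i \<in> I. (\<lambda>i\<in>I. f i (x i)) i \<noteq> \<one>\<^bsub>G' i\<^esub>}"
    by (rule finite_subset[rotated]) (use assms(4) in auto)
  moreover have "(\<lambda>i\<in>I. f i (x i)) \<in> (\<Pi>\<^sub>E i\<in>I. carrier (G' i))"
    using x assms(1,3) by (auto simp: carrier_sum_group PiE_iff)
  ultimately show "(\<lambda>i\<in>I. f i (x i)) \<in> carrier (sum_group I G')"
    using assms(2) by (simp add: carrier_sum_group)
qed

lemma SH_family_maps:
  assumes "0 < l"
  shows "tw (SH_family l i) \<in> {0..<int l} \<rightarrow> {0..<int l}" "tw (SH_family l i) 0 = 0"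
    and "res (SH_family l i) \<in> carrier (bullet (SH_family l i)) \<rightarrow> {0..<int l}"
      "res (SH_family l i) 0 = 0"
    and "tr (SH_family l i) \<in> {0..<int l} \<rightarrow> carrier (bullet (SH_family l i))"
      "tr (SH_family l i) 0 = 0"
  using assms by (cases i; simp)+

lemma SH_sum_closed:
  assumes "0 < l"
  shows "tw (mackey_sum I (SH_family l)) \<in> carrier (theta (mackey_sum I (SH_family l)))
           \<rightarrow> carrier (theta (mackey_sum I (SH_family l)))"
    and "res (mackey_sum I (SH_family l)) \<in> carrier (bullet (mackey_sum I (SH_family l)))
           \<rightarrow> carrier (theta (mackey_sum I (SH_family l)))"
    and "tr (mackey_sum I (SH_family l)) \<in> carrier (theta (mackey_sum I (SH_family l)))
           \<rightarrow> carrier (bullet (mackey_sum I (SH_family l)))"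
  unfolding mackey_sum_simps theta_SH_family
  by (intro sum_group_map_closed;
      simp add: SH_family_maps[OF assms] group_zmod_group[OF assms] group_bullet_SH_family[OF assms])+

lemma int_pow_hom_zmod_group:
  assumes "group G" "w \<in> carrier G" "w [^]\<^bsub>G\<^esub> l = \<one>\<^bsub>G\<^esub>"
  shows "(\<lambda>k::int. w [^]\<^bsub>G\<^esub> k) \<in> hom (zmod_group l) G"
proof -
  interpret group G by fact
  show ?thesis
    using assms by (auto intro!: homI simp: int_pow_mod_exponent int_pow_mult)
qed

lemma const_one_hom_trivial_group: "group G \<Longrightarrow> (\<lambda>k. \<one>\<^bsub>G\<^esub>) \<in> hom trivial_group G"
  by (auto simp: hom_def group.is_monoid)

lemma mackey_hom_comp:
  assumes "mackey_hom A B f" "mackey_hom B C h"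
  shows "mackey_hom A C (fst h \<circ> fst f, snd h \<circ> snd f)"
  using assms by (auto simp: mackey_hom_def hom_def Pi_def)

lemma mackey_iso_inv:
  assumes "group (theta A)" "group (bullet A)" and f: "mackey_hom A B f"
    and bij: "bij_betw (fst f) (carrier (theta A)) (carrier (theta B))"
      "bij_betw (snd f) (carrier (bullet A)) (carrier (bullet B))"
    and closed: "tw A \<in> carrier (theta A) \<rightarrow> carrier (theta A)"
      "res A \<in> carrier (bullet A) \<rightarrow> carrier (theta A)"
      "tr A \<in> carrier (theta A) \<rightarrow> carrier (bullet A)"
  shows "mackey_iso B A (inv_into (carrier (theta A)) (fst f), inv_into (carrier (bullet A)) (snd f))"
proof -
  define g1 where "g1 = inv_into (carrier (theta A)) (fst f)"
  define g2 where "g2 = inv_into (carrier (bullet A)) (snd f)"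
  have "fst f \<in> iso (theta A) (theta B)" "snd f \<in> iso (bullet A) (bullet B)"
    using f bij by (auto simp: mackey_hom_def iso_def)
  then have iso: "g1 \<in> iso (theta B) (theta A)" "g2 \<in> iso (bullet B) (bullet A)"
    using assms(1,2) unfolding g1_def g2_def by (auto intro: group.iso_set_sym)
  have g1: "g1 x \<in> carrier (theta A)" "fst f (g1 x) = x" if "x \<in> carrier (theta B)" for x
    using that bij(1) unfolding g1_def bij_betw_def by (auto intro: inv_into_into f_inv_into_f)
  have g2: "g2 y \<in> carrier (bullet A)" "snd f (g2 y) = y" if "y \<in> carrier (bullet B)" for y
    using that bij(2) unfolding g2_def bij_betw_def by (auto intro: inv_into_into f_inv_into_f)
  have inv1: "g1 (fst f a) = a" if "a \<in> carrier (theta A)" for a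
    using that bij(1) unfolding g1_def bij_betw_def by simp
  have inv2: "g2 (snd f b) = b" if "b \<in> carrier (bullet A)" for b
    using that bij(2) unfolding g2_def bij_betw_def by simp
  have "mackey_hom B A (g1, g2)"
    unfolding mackey_hom_def
  proof (intro conjI ballI)
    fix x assume x: "x \<in> carrier (theta B)"
    show "fst (g1, g2) (tw B x) = tw A (fst (g1, g2) x)"
      using inv1[of "tw A (g1 x)"] f closed(1) g1[OF x] by (auto simp: mackey_hom_def)
    show "snd (g1, g2) (tr B x) = tr A (fst (g1, g2) x)"
      using inv2[of "tr A (g1 x)"] f closed(3) g1[OF x] by (auto simp: mackey_hom_def)
  next
    fix y assume y: "y \<in> carrier (bullet B)"
    show "fst (g1, g2) (res B y) = res A (snd (g1, g2) y)"
      using inv1[of "res A (g2 y)"] f closed(2) g2[OF y] by (auto simp: mackey_hom_def)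
  qed (use iso in \<open>auto simp: iso_def\<close>)
  with iso show ?thesis unfolding mackey_iso_def g1_def g2_def by simp
qed

definition coeffs ::
    "nat \<Rightarrow> ('p + 'q) set \<Rightarrow> 'p set \<Rightarrow> ('p \<Rightarrow> int) \<Rightarrow> 'q set \<Rightarrow> ('q \<Rightarrow> int) \<Rightarrow> 'p + 'q \<Rightarrow> int" where
  "coeffs l I S c T d = (\<lambda>i\<in>I. case i of Inl a \<Rightarrow> if a \<in> S then c a mod int l else 0
                                       | Inr b \<Rightarrow> if b \<in> T then d b mod int l else 0)"

lemma coeffs_Inl [simp]: "Inl a \<in> I \<Longrightarrow> a \<in> S \<Longrightarrow> coeffs l I S c T d (Inl a) = c a mod int l"
  and coeffs_Inr [simp]: "Inr b \<in> I \<Longrightarrow> b \<in> T \<Longrightarrow> coeffs l I S c T d (Inr b) = d b mod int l"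
  and coeffs_outside: "i \<in> I \<Longrightarrow> i \<notin> Inl ` S \<union> Inr ` T \<Longrightarrow> coeffs l I S c T d i = 0"
  by (auto simp: coeffs_def split: sum.split)

lemma coeffs_support: "{i \<in> I. coeffs l I S c T d i \<noteq> 0} \<subseteq> Inl ` S \<union> Inr ` T"
  using coeffs_outside by blast

lemma coeffs_finite_support:
  "finite S \<Longrightarrow> finite T \<Longrightarrow> finite {i \<in> I. coeffs l I S c T d i \<noteq> 0}"
  using coeffs_support by (rule finite_subset) simp

lemma coeffs_in_sum_zmod_group:
  assumes "0 < l" "finite S" "finite T"
  shows "coeffs l I S c T d \<in> carrier (sum_group I (\<lambda>i. zmod_group l))"
proof -
  have "coeffs l I S c T d \<in> (\<Pi>\<^sub>E i\<in>I. {0..<int l})"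
    using assms(1) by (auto simp: coeffs_def PiE_iff split: sum.split)
  with coeffs_finite_support[OF assms(2,3)] show ?thesis
    by (simp add: carrier_sum_zmod_group[OF assms(1)])
qed

lemma coeffs_in_sum_bullet_SH_family:
  assumes "0 < l" "finite T"
  shows "coeffs l I {} c T d \<in> carrier (sum_group I (\<lambda>i. bullet (SH_family l i)))"
proof -
  have "coeffs l I {} c T d \<in> (\<Pi>\<^sub>E i\<in>I. carrier (bullet (SH_family l i)))"
    using assms(1) by (auto simp: coeffs_def PiE_iff split: sum.split)
  with coeffs_finite_support[OF finite.emptyI assms(2)] show ?thesis
    by (simp add: carrier_sum_bullet_SH_family[OF assms(1)])
qed

section \<open>Modules over the constant Mackey ring Z/l for odd primes l\<close>

locale odd_zl_module =
  fixes l :: nat and N :: "('c, 'd) mackey"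
  assumes zl_module: "zl_module l N" and prime: "Factorial_Ring.prime l" and odd: "odd l"
begin

lemma l_pos: "0 < l"
  using prime prime_gt_0_nat by blast

lemma theta_comm_group: "comm_group (theta N)" and bullet_comm_group: "comm_group (bullet N)"
  and tw_hom: "tw N \<in> hom (theta N) (theta N)"
  and res_hom: "res N \<in> hom (bullet N) (theta N)"
  and tr_hom: "tr N \<in> hom (theta N) (bullet N)"
  and tw_res: "\<And>y. y \<in> carrier (bullet N) \<Longrightarrow> tw N (res N y) = res N y"
  and tr_tw: "\<And>x. x \<in> carrier (theta N) \<Longrightarrow> tr N (tw N x) = tr N x"
  and tw_tw: "\<And>x. x \<in> carrier (theta N) \<Longrightarrow> tw N (tw N x) = x"
  and res_tr: "\<And>x. x \<in> carrier (theta N) \<Longrightarrow> res N (tr N x) = x \<otimes>\<^bsub>theta N\<^esub> tw N x"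
  and theta_exp: "\<And>x. x \<in> carrier (theta N) \<Longrightarrow> x [^]\<^bsub>theta N\<^esub> l = \<one>\<^bsub>theta N\<^esub>"
  and bullet_exp: "\<And>y. y \<in> carrier (bullet N) \<Longrightarrow> y [^]\<^bsub>bullet N\<^esub> l = \<one>\<^bsub>bullet N\<^esub>"
  and tr_res: "\<And>y. y \<in> carrier (bullet N) \<Longrightarrow> tr N (res N y) = y \<otimes>\<^bsub>bullet N\<^esub> y"
  using zl_module unfolding zl_module_def is_mackey_def by auto

sublocale Th: comm_group "theta N" by (rule theta_comm_group)
sublocale Bu: comm_group "bullet N" by (rule bullet_comm_group)
sublocale twh: group_hom "theta N" "theta N" "tw N"
  by (simp add: group_hom_def group_hom_axioms_def Th.is_group tw_hom)
sublocale resh: group_hom "bullet N" "theta N" "res N"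
  by (simp add: group_hom_def group_hom_axioms_def Th.is_group Bu.is_group res_hom)
sublocale trh: group_hom "theta N" "bullet N" "tr N"
  by (simp add: group_hom_def group_hom_axioms_def Th.is_group Bu.is_group tr_hom)

lemma theta_pow_mod [simp]: "x \<in> carrier (theta N) \<Longrightarrow> x [^]\<^bsub>theta N\<^esub> (k mod int l) = x [^]\<^bsub>theta N\<^esub> k"
  by (rule Th.int_pow_mod_exponent[OF _ theta_exp])

lemma bullet_pow_mod [simp]: "y \<in> carrier (bullet N) \<Longrightarrow> y [^]\<^bsub>bullet N\<^esub> (k mod int l) = y [^]\<^bsub>bullet N\<^esub> k"
  by (rule Bu.int_pow_mod_exponent[OF _ bullet_exp])

definition minus_part :: "'c set" where
  "minus_part = {x \<in> carrier (theta N). tw N x = inv\<^bsub>theta N\<^esub> x}"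

lemma minus_partD: "x \<in> minus_part \<Longrightarrow> x \<in> carrier (theta N) \<and> tw N x = inv\<^bsub>theta N\<^esub> x"
  by (simp add: minus_part_def)

lemma minus_part_subgroup: "subgroup minus_part (theta N)"
proof (rule Th.subgroupI)
  show "minus_part \<subseteq> carrier (theta N)" "minus_part \<noteq> {}"
    using minus_part_def by auto
next
  fix a b assume "a \<in> minus_part" "b \<in> minus_part"
  then show "inv\<^bsub>theta N\<^esub> a \<in> minus_part" "a \<otimes>\<^bsub>theta N\<^esub> b \<in> minus_part"
    by (auto simp: minus_part_def Th.inv_mult)
qed

lemma tr_minus_part:
  assumes "x \<in> minus_part" shows "tr N x = \<one>\<^bsub>bullet N\<^esub>"
proof -
  have x: "x \<in> carrier (theta N)" "tw N x = inv\<^bsub>theta N\<^esub> x" using minus_partD[OF assms] by auto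
  have "tr N x = inv\<^bsub>bullet N\<^esub> (tr N x)" using tr_tw[OF x(1)] x by simp
  then have "tr N x \<otimes>\<^bsub>bullet N\<^esub> tr N x = \<one>\<^bsub>bullet N\<^esub>"
    using x(1) by (metis Bu.r_inv trh.hom_closed)
  moreover have "tr N x \<in> carrier (bullet N)" using x(1) by simp
  ultimately show ?thesis using Bu.square_eq_one_imp_eq_one[OF _ bullet_exp odd] by blast
qed

lemma theta_decomposition:
  assumes z: "z \<in> carrier (theta N)"
  obtains q p where "q \<in> minus_part" "p \<in> carrier (bullet N)" "z = q \<otimes>\<^bsub>theta N\<^esub> res N p"
proof -
  define p where "p = tr N z [^]\<^bsub>bullet N\<^esub> ((int l + 1) div 2)"
  have p: "p \<in> carrier (bullet N)" using z by (simp add: p_def)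
  have "p \<otimes>\<^bsub>bullet N\<^esub> p = tr N z"
    using Bu.pow_half_square[of "tr N z" l] z bullet_exp odd by (simp add: p_def Bu.int_pow_distrib)
  then have rr: "res N p \<otimes>\<^bsub>theta N\<^esub> res N p = z \<otimes>\<^bsub>theta N\<^esub> tw N z"
    using p z res_tr by (metis resh.hom_mult)
  define q where "q = z \<otimes>\<^bsub>theta N\<^esub> inv\<^bsub>theta N\<^esub> res N p"
  have q: "q \<in> carrier (theta N)" using z p by (simp add: q_def)
  have "tw N q \<otimes>\<^bsub>theta N\<^esub> q
      = (z \<otimes>\<^bsub>theta N\<^esub> tw N z) \<otimes>\<^bsub>theta N\<^esub> inv\<^bsub>theta N\<^esub> (res N p \<otimes>\<^bsub>theta N\<^esub> res N p)"
    using z p by (simp add: q_def tw_res Th.inv_mult Th.m_ac)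
  also have "\<dots> = \<one>\<^bsub>theta N\<^esub>" using rr z p by simp
  finally have "q \<in> minus_part"
    using q by (simp add: minus_part_def Th.inv_equality)
  moreover have "z = q \<otimes>\<^bsub>theta N\<^esub> res N p" using z p by (simp add: q_def Th.m_assoc)
  ultimately show ?thesis using that p by blast
qed

lemma minus_part_res_eq_one:
  assumes q: "q \<in> minus_part" and p: "p \<in> carrier (bullet N)"
    and eq: "q \<otimes>\<^bsub>theta N\<^esub> res N p = \<one>\<^bsub>theta N\<^esub>"
  shows "q = \<one>\<^bsub>theta N\<^esub>" "p = \<one>\<^bsub>bullet N\<^esub>"
proof -
  have q': "q \<in> carrier (theta N)" "tw N q = inv\<^bsub>theta N\<^esub> q" using minus_partD[OF q] by auto
  have "tw N (q \<otimes>\<^bsub>theta N\<^esub> res N p) = \<one>\<^bsub>theta N\<^esub>" using eq by simp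
  then have "inv\<^bsub>theta N\<^esub> q \<otimes>\<^bsub>theta N\<^esub> res N p = \<one>\<^bsub>theta N\<^esub>"
    using q' p tw_res by simp
  then have "inv\<^bsub>theta N\<^esub> q = q" using eq q' p by (metis Th.inv_closed Th.right_cancel resh.hom_closed)
  then have "q \<otimes>\<^bsub>theta N\<^esub> q = \<one>\<^bsub>theta N\<^esub>" using q' by (metis Th.r_inv)
  then show q1: "q = \<one>\<^bsub>theta N\<^esub>"
    using Th.square_eq_one_imp_eq_one[OF q'(1) theta_exp[OF q'(1)] odd] by blast
  then have "tr N (res N p) = \<one>\<^bsub>bullet N\<^esub>" using eq p by simp
  then have "p \<otimes>\<^bsub>bullet N\<^esub> p = \<one>\<^bsub>bullet N\<^esub>" using tr_res[OF p] by simp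
  then show "p = \<one>\<^bsub>bullet N\<^esub>"
    using Bu.square_eq_one_imp_eq_one[OF p bullet_exp[OF p] odd] by blast
qed

text \<open>The pair (lincomb_theta I \<alpha> \<beta>, lincomb_bullet I \<beta>) is the morphism from the sum of copies
  of S_Theta (indexed by Inl) and of H (indexed by Inr) to N that sends the generator 1 of the
  copy Inl a to \<alpha> a and the generator 1 of H_bullet in the copy Inr b to \<beta> b.\<close>

definition gen_theta :: "('p \<Rightarrow> 'c) \<Rightarrow> ('q \<Rightarrow> 'd) \<Rightarrow> 'p + 'q \<Rightarrow> 'c" where
  "gen_theta \<alpha> \<beta> i = (case i of Inl a \<Rightarrow> \<alpha> a | Inr b \<Rightarrow> res N (\<beta> b))"

definition gen_bullet :: "('q \<Rightarrow> 'd) \<Rightarrow> 'p + 'q \<Rightarrow> 'd" where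
  "gen_bullet \<beta> i = (case i of Inl a \<Rightarrow> \<one>\<^bsub>bullet N\<^esub> | Inr b \<Rightarrow> \<beta> b)"

definition lincomb_theta :: "('p + 'q) set \<Rightarrow> ('p \<Rightarrow> 'c) \<Rightarrow> ('q \<Rightarrow> 'd) \<Rightarrow> ('p + 'q \<Rightarrow> int) \<Rightarrow> 'c" where
  "lincomb_theta I \<alpha> \<beta> x = gfinprod (theta N) (\<lambda>i. gen_theta \<alpha> \<beta> i [^]\<^bsub>theta N\<^esub> x i) I"

definition lincomb_bullet :: "('p + 'q) set \<Rightarrow> ('q \<Rightarrow> 'd) \<Rightarrow> ('p + 'q \<Rightarrow> int) \<Rightarrow> 'd" where
  "lincomb_bullet I \<beta> y = gfinprod (bullet N) (\<lambda>i. gen_bullet \<beta> i [^]\<^bsub>bullet N\<^esub> y i) I"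

lemma gen_theta_simps [simp]: "gen_theta \<alpha> \<beta> (Inl a) = \<alpha> a" "gen_theta \<alpha> \<beta> (Inr b) = res N (\<beta> b)"
  and gen_bullet_simps [simp]: "gen_bullet \<beta> (Inl a) = \<one>\<^bsub>bullet N\<^esub>" "gen_bullet \<beta> (Inr b) = \<beta> b"
  by (simp_all add: gen_theta_def gen_bullet_def)

context
  fixes I :: "('p + 'q) set" and \<alpha> :: "'p \<Rightarrow> 'c" and \<beta> :: "'q \<Rightarrow> 'd"
  assumes \<alpha>: "\<And>a. Inl a \<in> I \<Longrightarrow> \<alpha> a \<in> minus_part"
    and \<beta>: "\<And>b. Inr b \<in> I \<Longrightarrow> \<beta> b \<in> carrier (bullet N)"
begin

lemma gen_theta_carrier: "i \<in> I \<Longrightarrow> gen_theta \<alpha> \<beta> i \<in> carrier (theta N)"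
  by (cases i) (auto dest: \<alpha> \<beta> minus_partD)

lemma gen_bullet_carrier: "i \<in> I \<Longrightarrow> gen_bullet \<beta> i \<in> carrier (bullet N)"
  by (cases i) (auto dest: \<beta>)

lemma lincomb_theta_hom: "lincomb_theta I \<alpha> \<beta> \<in> hom (sum_group I (\<lambda>i. zmod_group l)) (theta N)"
proof -
  have "(\<lambda>x. gfinprod (theta N) (\<lambda>i. (\<lambda>k::int. gen_theta \<alpha> \<beta> i [^]\<^bsub>theta N\<^esub> k) (x i)) I)
      \<in> hom (sum_group I (\<lambda>i. zmod_group l)) (theta N)"
    by (rule Th.hom_group_sum)
      (auto intro!: int_pow_hom_zmod_group Th.is_group gen_theta_carrier theta_exp group_zmod_group l_pos)
  then show ?thesis by (simp add: lincomb_theta_def[abs_def])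
qed

lemma lincomb_bullet_hom:
  "lincomb_bullet I \<beta> \<in> hom (sum_group I (\<lambda>i. bullet (SH_family l i))) (bullet N)"
proof -
  have "(\<lambda>y. gfinprod (bullet N) (\<lambda>i. (\<lambda>k::int. gen_bullet \<beta> i [^]\<^bsub>bullet N\<^esub> k) (y i)) I)
      \<in> hom (sum_group I (\<lambda>i. bullet (SH_family l i))) (bullet N)"
  proof (rule Bu.hom_group_sum)
    fix i assume "i \<in> I"
    then show "(\<lambda>k::int. gen_bullet \<beta> i [^]\<^bsub>bullet N\<^esub> k) \<in> hom (bullet (SH_family l i)) (bullet N)"
      using \<beta> const_one_hom_trivial_group[OF Bu.is_group]
      by (cases i) (auto intro!: int_pow_hom_zmod_group Bu.is_group bullet_exp)
  qed (rule group_bullet_SH_family[OF l_pos])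
  then show ?thesis by (simp add: lincomb_bullet_def[abs_def])
qed

lemma gen_tw:
  assumes "i \<in> I" "k \<in> {0..<int l}"
  shows "gen_theta \<alpha> \<beta> i [^]\<^bsub>theta N\<^esub> tw (SH_family l i) k = tw N (gen_theta \<alpha> \<beta> i [^]\<^bsub>theta N\<^esub> k)"
proof (cases i)
  case (Inl a)
  then have a: "\<alpha> a \<in> carrier (theta N)" "tw N (\<alpha> a) = inv\<^bsub>theta N\<^esub> (\<alpha> a)"
    using \<alpha> assms(1) minus_partD by auto
  have "\<alpha> a [^]\<^bsub>theta N\<^esub> ((- k) mod int l) = inv\<^bsub>theta N\<^esub> (\<alpha> a [^]\<^bsub>theta N\<^esub> k)"
    using a(1) by (simp add: Th.int_pow_neg)
  then show ?thesis using Inl a by (simp add: twh.hom_int_pow Th.int_pow_inv)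
next
  case (Inr b)
  then show ?thesis using \<beta> assms(1) by (simp add: twh.hom_int_pow tw_res)
qed

lemma gen_res:
  assumes "i \<in> I"
  shows "gen_theta \<alpha> \<beta> i [^]\<^bsub>theta N\<^esub> res (SH_family l i) k = res N (gen_bullet \<beta> i [^]\<^bsub>bullet N\<^esub> k)"
  using assms \<beta> by (cases i) (simp_all add: resh.hom_int_pow)

lemma gen_tr:
  assumes "i \<in> I" "k \<in> {0..<int l}"
  shows "gen_bullet \<beta> i [^]\<^bsub>bullet N\<^esub> tr (SH_family l i) k = tr N (gen_theta \<alpha> \<beta> i [^]\<^bsub>theta N\<^esub> k)"
proof (cases i)
  case (Inl a)
  then show ?thesis
    using \<alpha> assms(1) tr_minus_part minus_partD by (simp add: trh.hom_int_pow)
next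
  case (Inr b)
  then have b: "\<beta> b \<in> carrier (bullet N)" using \<beta> assms(1) by simp
  have "\<beta> b [^]\<^bsub>bullet N\<^esub> ((2 * k) mod int l) = (\<beta> b [^]\<^bsub>bullet N\<^esub> (2::int)) [^]\<^bsub>bullet N\<^esub> k"
    using b by (simp add: Bu.int_pow_pow)
  also have "\<beta> b [^]\<^bsub>bullet N\<^esub> (2::int) = \<beta> b \<otimes>\<^bsub>bullet N\<^esub> \<beta> b"
    using Bu.int_pow_mult[OF b, of 1 1] b by simp
  finally show ?thesis using Inr b by (simp add: trh.hom_int_pow tr_res)
qed

lemma lincomb_theta_tw_tr:
  assumes "x \<in> carrier (sum_group I (\<lambda>i. zmod_group l))"
  shows "lincomb_theta I \<alpha> \<beta> (\<lambda>i\<in>I. tw (SH_family l i) (x i)) = tw N (lincomb_theta I \<alpha> \<beta> x)"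
    and "lincomb_bullet I \<beta> (\<lambda>i\<in>I. tr (SH_family l i) (x i)) = tr N (lincomb_theta I \<alpha> \<beta> x)"
proof -
  have x: "\<And>i. i \<in> I \<Longrightarrow> x i \<in> {0..<int l}" and fin: "finite {i \<in> I. x i \<noteq> 0}"
    using assms by (auto simp: carrier_sum_zmod_group[OF l_pos])
  have terms: "(\<lambda>i. gen_theta \<alpha> \<beta> i [^]\<^bsub>theta N\<^esub> x i) \<in> I \<rightarrow> carrier (theta N)"
    using gen_theta_carrier by auto
  note hom_lincomb = hom_gfinprod[OF theta_comm_group _ _ terms finite_support_pow[OF fin], symmetric]
  have "lincomb_theta I \<alpha> \<beta> (\<lambda>i\<in>I. tw (SH_family l i) (x i))
      = gfinprod (theta N) (\<lambda>i. tw N (gen_theta \<alpha> \<beta> i [^]\<^bsub>theta N\<^esub> x i)) I"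
    unfolding lincomb_theta_def
    by (rule Th.gfinprod_cong) (use gen_theta_carrier x gen_tw in \<open>auto simp: simp_implies_def\<close>)
  also have "\<dots> = tw N (lincomb_theta I \<alpha> \<beta> x)"
    unfolding lincomb_theta_def by (rule hom_lincomb[OF theta_comm_group tw_hom])
  finally show "lincomb_theta I \<alpha> \<beta> (\<lambda>i\<in>I. tw (SH_family l i) (x i)) = tw N (lincomb_theta I \<alpha> \<beta> x)" .
  have "lincomb_bullet I \<beta> (\<lambda>i\<in>I. tr (SH_family l i) (x i))
      = gfinprod (bullet N) (\<lambda>i. tr N (gen_theta \<alpha> \<beta> i [^]\<^bsub>theta N\<^esub> x i)) I"
    unfolding lincomb_bullet_def
    by (rule Bu.gfinprod_cong) (use gen_bullet_carrier x gen_tr in \<open>auto simp: simp_implies_def\<close>)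
  also have "\<dots> = tr N (lincomb_theta I \<alpha> \<beta> x)"
    unfolding lincomb_theta_def by (rule hom_lincomb[OF bullet_comm_group tr_hom])
  finally show "lincomb_bullet I \<beta> (\<lambda>i\<in>I. tr (SH_family l i) (x i)) = tr N (lincomb_theta I \<alpha> \<beta> x)" .
qed

lemma lincomb_theta_res:
  assumes "y \<in> carrier (sum_group I (\<lambda>i. bullet (SH_family l i)))"
  shows "lincomb_theta I \<alpha> \<beta> (\<lambda>i\<in>I. res (SH_family l i) (y i)) = res N (lincomb_bullet I \<beta> y)"
proof -
  have fin: "finite {i \<in> I. y i \<noteq> 0}"
    using assms by (auto simp: carrier_sum_bullet_SH_family[OF l_pos])
  have terms: "(\<lambda>i. gen_bullet \<beta> i [^]\<^bsub>bullet N\<^esub> y i) \<in> I \<rightarrow> carrier (bullet N)"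
    using gen_bullet_carrier by auto
  have "lincomb_theta I \<alpha> \<beta> (\<lambda>i\<in>I. res (SH_family l i) (y i))
      = gfinprod (theta N) (\<lambda>i. res N (gen_bullet \<beta> i [^]\<^bsub>bullet N\<^esub> y i)) I"
    unfolding lincomb_theta_def
    by (rule Th.gfinprod_cong) (use gen_theta_carrier gen_res in \<open>auto simp: simp_implies_def\<close>)
  also have "\<dots> = res N (lincomb_bullet I \<beta> y)"
    unfolding lincomb_bullet_def
    by (rule hom_gfinprod[OF bullet_comm_group theta_comm_group res_hom terms finite_support_pow[OF fin], symmetric])
  finally show ?thesis .
qed

lemma lincomb_mackey_hom:
  "mackey_hom (mackey_sum I (SH_family l)) N (lincomb_theta I \<alpha> \<beta>, lincomb_bullet I \<beta>)"
  using lincomb_theta_hom lincomb_bullet_hom lincomb_theta_tw_tr lincomb_theta_res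
  by (simp add: mackey_hom_def)

end

lemma exists_bases:
  obtains Bm Bb where "Bm \<subseteq> minus_part" "indep_mod (theta N) l Bm" "minus_part \<subseteq> int_span (theta N) Bm"
    "Bb \<subseteq> carrier (bullet N)" "indep_mod (bullet N) l Bb" "carrier (bullet N) \<subseteq> int_span (bullet N) Bb"
  using Th.exists_basis[OF prime _ minus_part_subgroup] Bu.exists_basis[OF prime _ Bu.subgroup_self]
    theta_exp bullet_exp by metis

context
  fixes Bm :: "'c set" and Bb :: "'d set"
  assumes Bm: "Bm \<subseteq> minus_part" "indep_mod (theta N) l Bm" "minus_part \<subseteq> int_span (theta N) Bm"
    and Bb: "Bb \<subseteq> carrier (bullet N)" "indep_mod (bullet N) l Bb" "carrier (bullet N) \<subseteq> int_span (bullet N) Bb"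
begin

text \<open>The basis vectors themselves index the summands, which is why the index type 'a + 'b
  in sum_of_H_S suffices.\<close>

abbreviation (input) basis_index :: "('c + 'd) set" where
  "basis_index \<equiv> Inl ` Bm \<union> Inr ` Bb"

lemma gen_theta_basis_carrier: "i \<in> basis_index \<Longrightarrow> gen_theta id id i \<in> carrier (theta N)"
  by (rule gen_theta_carrier[of basis_index id id]) (use Bm Bb in auto)

lemma gen_bullet_basis_carrier: "i \<in> basis_index \<Longrightarrow> gen_bullet id i \<in> carrier (bullet N)"
  by (rule gen_bullet_carrier[of basis_index id id]) (use Bm Bb in auto)

lemma lincomb_theta_basis:
  assumes "finite S" "S \<subseteq> Bm" "finite T" "T \<subseteq> Bb"
    and zero: "\<And>i. i \<in> basis_index - (Inl ` S \<union> Inr ` T) \<Longrightarrow> x i = 0"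
  shows "lincomb_theta basis_index id id x = finprod (theta N) (\<lambda>a. a [^]\<^bsub>theta N\<^esub> x (Inl a)) S
      \<otimes>\<^bsub>theta N\<^esub> res N (finprod (bullet N) (\<lambda>b. b [^]\<^bsub>bullet N\<^esub> x (Inr b)) T)"
proof -
  have "lincomb_theta basis_index id id x
      = finprod (theta N) (\<lambda>a. gen_theta id id (Inl a) [^]\<^bsub>theta N\<^esub> x (Inl a)) S
        \<otimes>\<^bsub>theta N\<^esub> finprod (theta N) (\<lambda>b. gen_theta id id (Inr b) [^]\<^bsub>theta N\<^esub> x (Inr b)) T"
    unfolding lincomb_theta_def
    by (rule Th.gfinprod_Inl_Inr) (use assms gen_theta_basis_carrier in auto)
  also have "finprod (theta N) (\<lambda>a. gen_theta id id (Inl a) [^]\<^bsub>theta N\<^esub> x (Inl a)) S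
      = finprod (theta N) (\<lambda>a. a [^]\<^bsub>theta N\<^esub> x (Inl a)) S"
    by simp
  also have "finprod (theta N) (\<lambda>b. gen_theta id id (Inr b) [^]\<^bsub>theta N\<^esub> x (Inr b)) T
      = finprod (theta N) (\<lambda>b. res N (b [^]\<^bsub>bullet N\<^esub> x (Inr b))) T"
    by (rule Th.finprod_cong') (use assms Bb in \<open>auto simp: resh.hom_int_pow\<close>)
  also have "\<dots> = res N (finprod (bullet N) (\<lambda>b. b [^]\<^bsub>bullet N\<^esub> x (Inr b)) T)"
    by (rule hom_finprod[OF bullet_comm_group theta_comm_group res_hom, symmetric]) (use assms Bb in auto)
  finally show ?thesis .
qed

lemma lincomb_bullet_basis:
  assumes "finite T" "T \<subseteq> Bb"
    and zero: "\<And>i. i \<in> basis_index - Inr ` T \<Longrightarrow> y i = 0"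
  shows "lincomb_bullet basis_index id y = finprod (bullet N) (\<lambda>b. b [^]\<^bsub>bullet N\<^esub> y (Inr b)) T"
proof -
  have "lincomb_bullet basis_index id y = finprod (bullet N) (\<lambda>i. gen_bullet id i [^]\<^bsub>bullet N\<^esub> y i) (Inr ` T)"
    unfolding lincomb_bullet_def
    by (rule Bu.gfinprod_eq_finprod_superset) (use assms gen_bullet_basis_carrier in auto)
  also have "\<dots> = finprod (bullet N) (\<lambda>b. b [^]\<^bsub>bullet N\<^esub> y (Inr b)) T"
    by (subst Bu.finprod_reindex) (use assms Bb in auto)
  finally show ?thesis .
qed

lemma lincomb_theta_basis_kernel:
  assumes x: "x \<in> carrier (sum_group basis_index (\<lambda>i. zmod_group l))"
    and x_one: "lincomb_theta basis_index id id x = \<one>\<^bsub>theta N\<^esub>"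
  shows "x = \<one>\<^bsub>sum_group basis_index (\<lambda>i. zmod_group l)\<^esub>"
proof -
  have x_range: "\<And>i. i \<in> basis_index \<Longrightarrow> x i \<in> {0..<int l}"
    and x_ext: "x \<in> extensional basis_index" and fin: "finite {i \<in> basis_index. x i \<noteq> 0}"
    using x by (auto simp: carrier_sum_zmod_group[OF l_pos] PiE_iff)
  define S where "S = {a \<in> Bm. x (Inl a) \<noteq> 0}"
  define T where "T = {b \<in> Bb. x (Inr b) \<noteq> 0}"
  have S: "finite S" "S \<subseteq> Bm" and T: "finite T" "T \<subseteq> Bb"
    using finite_vimageI[OF fin, of Inl] finite_vimageI[OF fin, of Inr]
    by (auto simp: S_def T_def vimage_def elim: rev_finite_subset)
  let ?q = "finprod (theta N) (\<lambda>a. a [^]\<^bsub>theta N\<^esub> x (Inl a)) S"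
  let ?p = "finprod (bullet N) (\<lambda>b. b [^]\<^bsub>bullet N\<^esub> x (Inr b)) T"
  have "lincomb_theta basis_index id id x = ?q \<otimes>\<^bsub>theta N\<^esub> res N ?p"
    by (rule lincomb_theta_basis[OF S T]) (auto simp: S_def T_def)
  then have "?q \<otimes>\<^bsub>theta N\<^esub> res N ?p = \<one>\<^bsub>theta N\<^esub>" using x_one by simp
  moreover have "?q \<in> minus_part"
    using S Bm(1) by (auto intro!: Th.subgroup_finprod minus_part_subgroup
        Th.subgroup_int_pow_closed[OF minus_part_subgroup])
  moreover have "?p \<in> carrier (bullet N)" using T Bb(1) by (auto intro!: Bu.finprod_closed)
  ultimately have "?q = \<one>\<^bsub>theta N\<^esub>" "?p = \<one>\<^bsub>bullet N\<^esub>"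
    using minus_part_res_eq_one by blast+
  then have dvd: "\<forall>a\<in>S. int l dvd x (Inl a)" "\<forall>b\<in>T. int l dvd x (Inr b)"
    using indep_modD[OF Bm(2) S, of "\<lambda>a. x (Inl a)"] indep_modD[OF Bb(2) T, of "\<lambda>b. x (Inr b)"]
    by blast+
  have "x i = 0" if i: "i \<in> basis_index" for i
  proof (rule ccontr)
    assume "x i \<noteq> 0"
    with i dvd have "int l dvd x i" by (auto simp: S_def T_def)
    with \<open>x i \<noteq> 0\<close> show False using int_dvd_in_range_eq_0 x_range[OF i] by blast
  qed
  with x_ext show ?thesis by (auto simp: extensional_def)
qed

lemma lincomb_theta_basis_surj:
  assumes z: "z \<in> carrier (theta N)"
  shows "\<exists>x \<in> carrier (sum_group basis_index (\<lambda>i. zmod_group l)). lincomb_theta basis_index id id x = z"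
proof -
  obtain q p where q: "q \<in> minus_part" and p: "p \<in> carrier (bullet N)"
    and z_eq: "z = q \<otimes>\<^bsub>theta N\<^esub> res N p"
    using theta_decomposition[OF z] .
  obtain S c where S: "finite S" "S \<subseteq> Bm" and q_eq: "q = finprod (theta N) (\<lambda>a. a [^]\<^bsub>theta N\<^esub> (c a :: int)) S"
    using q Bm(3) by (blast elim: int_spanE)
  obtain T d where T: "finite T" "T \<subseteq> Bb" and p_eq: "p = finprod (bullet N) (\<lambda>b. b [^]\<^bsub>bullet N\<^esub> (d b :: int)) T"
    using p Bb(3) by (blast elim: int_spanE)
  define x where "x = coeffs l basis_index S c T d"
  have "lincomb_theta basis_index id id x = finprod (theta N) (\<lambda>a. a [^]\<^bsub>theta N\<^esub> x (Inl a)) S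
      \<otimes>\<^bsub>theta N\<^esub> res N (finprod (bullet N) (\<lambda>b. b [^]\<^bsub>bullet N\<^esub> x (Inr b)) T)"
    by (rule lincomb_theta_basis[OF S T]) (simp add: x_def coeffs_outside)
  also have "finprod (theta N) (\<lambda>a. a [^]\<^bsub>theta N\<^esub> x (Inl a)) S = q"
    unfolding q_eq using S Bm(1) minus_partD by (intro Th.finprod_cong') (auto simp: x_def subsetD)
  also have "finprod (bullet N) (\<lambda>b. b [^]\<^bsub>bullet N\<^esub> x (Inr b)) T = p"
    unfolding p_eq using T Bb(1) by (intro Bu.finprod_cong') (auto simp: x_def subsetD)
  finally show ?thesis
    using coeffs_in_sum_zmod_group[OF l_pos S(1) T(1)] z_eq x_def by blast
qed

lemma lincomb_bullet_basis_kernel: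
  assumes y: "y \<in> carrier (sum_group basis_index (\<lambda>i. bullet (SH_family l i)))"
    and y_one: "lincomb_bullet basis_index id y = \<one>\<^bsub>bullet N\<^esub>"
  shows "y = \<one>\<^bsub>sum_group basis_index (\<lambda>i. bullet (SH_family l i))\<^esub>"
proof -
  have y_range: "\<And>i. i \<in> basis_index \<Longrightarrow> y i \<in> carrier (bullet (SH_family l i))"
    and y_ext: "y \<in> extensional basis_index" and fin: "finite {i \<in> basis_index. y i \<noteq> 0}"
    using y by (auto simp: carrier_sum_bullet_SH_family[OF l_pos] PiE_iff)
  define T where "T = {b \<in> Bb. y (Inr b) \<noteq> 0}"
  have T: "finite T" "T \<subseteq> Bb"
    using finite_vimageI[OF fin, of Inr] by (auto simp: T_def vimage_def elim: rev_finite_subset)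
  have "lincomb_bullet basis_index id y = finprod (bullet N) (\<lambda>b. b [^]\<^bsub>bullet N\<^esub> y (Inr b)) T"
    by (rule lincomb_bullet_basis[OF T]) (use y_range in \<open>fastforce simp: T_def\<close>)
  then have "finprod (bullet N) (\<lambda>b. b [^]\<^bsub>bullet N\<^esub> y (Inr b)) T = \<one>\<^bsub>bullet N\<^esub>"
    using y_one by simp
  then have dvd: "\<forall>b\<in>T. int l dvd y (Inr b)"
    using indep_modD[OF Bb(2) T, of "\<lambda>b. y (Inr b)"] by blast
  have "y i = 0" if i: "i \<in> basis_index" for i
  proof (cases i)
    case (Inl a)
    then show ?thesis using y_range[OF i] by simp
  next
    case (Inr b)
    then show ?thesis
      using y_range[OF i] i dvd int_dvd_in_range_eq_0 by (auto simp: T_def)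
  qed
  with y_ext show ?thesis by (auto simp: extensional_def)
qed

lemma lincomb_bullet_basis_surj:
  assumes p: "p \<in> carrier (bullet N)"
  shows "\<exists>y \<in> carrier (sum_group basis_index (\<lambda>i. bullet (SH_family l i))). lincomb_bullet basis_index id y = p"
proof -
  obtain T d where T: "finite T" "T \<subseteq> Bb" and p_eq: "p = finprod (bullet N) (\<lambda>b. b [^]\<^bsub>bullet N\<^esub> (d b :: int)) T"
    using p Bb(3) by (blast elim: int_spanE)
  define y where "y = coeffs l basis_index {} (\<lambda>_. 0) T d"
  have "lincomb_bullet basis_index id y = finprod (bullet N) (\<lambda>b. b [^]\<^bsub>bullet N\<^esub> y (Inr b)) T"
    by (rule lincomb_bullet_basis[OF T]) (simp add: y_def coeffs_outside)
  also have "\<dots> = p"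
    unfolding p_eq using T Bb(1) by (intro Bu.finprod_cong') (auto simp: y_def subsetD)
  finally show ?thesis
    using coeffs_in_sum_bullet_SH_family[OF l_pos T(1)] y_def by blast
qed

lemma lincomb_basis_bij:
  "bij_betw (lincomb_theta basis_index id id) (carrier (theta (mackey_sum basis_index (SH_family l))))
     (carrier (theta N))"
  "bij_betw (lincomb_bullet basis_index id) (carrier (bullet (mackey_sum basis_index (SH_family l))))
     (carrier (bullet N))"
proof -
  have hom: "mackey_hom (mackey_sum basis_index (SH_family l)) N
      (lincomb_theta basis_index id id, lincomb_bullet basis_index id)"
    by (rule lincomb_mackey_hom) (use Bm(1) Bb(1) in auto)
  show "bij_betw (lincomb_theta basis_index id id) (carrier (theta (mackey_sum basis_index (SH_family l))))
     (carrier (theta N))"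
  proof (rule hom_bij_betwI)
    show "group (theta (mackey_sum basis_index (SH_family l)))" by (simp add: group_zmod_group l_pos)
  qed (use hom lincomb_theta_basis_kernel lincomb_theta_basis_surj Th.is_group in \<open>simp_all add: mackey_hom_def\<close>)
  show "bij_betw (lincomb_bullet basis_index id) (carrier (bullet (mackey_sum basis_index (SH_family l))))
     (carrier (bullet N))"
  proof (rule hom_bij_betwI)
    show "group (bullet (mackey_sum basis_index (SH_family l)))" by (simp add: group_bullet_SH_family l_pos)
  qed (use hom lincomb_bullet_basis_kernel lincomb_bullet_basis_surj Bu.is_group in \<open>simp_all add: mackey_hom_def\<close>)
qed

end

lemma exists_SH_decomposition:
  obtains I :: "('c + 'd) set" where
    "\<And>a. Inl a \<in> I \<Longrightarrow> a \<in> minus_part" "\<And>b. Inr b \<in> I \<Longrightarrow> b \<in> carrier (bullet N)"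
    "bij_betw (lincomb_theta I id id) (carrier (theta (mackey_sum I (SH_family l)))) (carrier (theta N))"
    "bij_betw (lincomb_bullet I id) (carrier (bullet (mackey_sum I (SH_family l)))) (carrier (bullet N))"
proof -
  obtain Bm Bb where bases: "Bm \<subseteq> minus_part" "indep_mod (theta N) l Bm" "minus_part \<subseteq> int_span (theta N) Bm"
    "Bb \<subseteq> carrier (bullet N)" "indep_mod (bullet N) l Bb" "carrier (bullet N) \<subseteq> int_span (bullet N) Bb"
    by (rule exists_bases)
  show ?thesis
    by (rule that[of "Inl ` Bm \<union> Inr ` Bb"]) (use bases lincomb_basis_bij[OF bases] in auto)
qed

lemma lincomb_mackey_iso:
  assumes "\<And>a. Inl a \<in> I \<Longrightarrow> a \<in> minus_part" "\<And>b. Inr b \<in> I \<Longrightarrow> b \<in> carrier (bullet N)"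
    and "bij_betw (lincomb_theta I id id) (carrier (theta (mackey_sum I (SH_family l)))) (carrier (theta N))"
    and "bij_betw (lincomb_bullet I id) (carrier (bullet (mackey_sum I (SH_family l)))) (carrier (bullet N))"
  shows "mackey_iso N (mackey_sum I (SH_family l))
    (inv_into (carrier (theta (mackey_sum I (SH_family l)))) (lincomb_theta I id id),
     inv_into (carrier (bullet (mackey_sum I (SH_family l)))) (lincomb_bullet I id))"
proof -
  have "mackey_hom (mackey_sum I (SH_family l)) N (lincomb_theta I id id, lincomb_bullet I id)"
    by (rule lincomb_mackey_hom) (use assms(1,2) in auto)
  then show ?thesis
    using mackey_iso_inv[of "mackey_sum I (SH_family l)" N "(lincomb_theta I id id, lincomb_bullet I id)"]
      assms(3,4) SH_sum_closed[OF l_pos, of I] by (simp add: group_zmod_group group_bullet_SH_family l_pos)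
qed

theorem sum_of_H_S: "sum_of_H_S l N"
proof -
  obtain I :: "('c + 'd) set" where "mackey_isomorphic N (mackey_sum I (SH_family l))"
    using exists_SH_decomposition lincomb_mackey_iso unfolding mackey_isomorphic_def by metis
  moreover have "\<forall>i\<in>I. SH_family l i = H_mackey l \<or> SH_family l i = S_mackey l"
    by (auto simp: SH_family_def split: sum.split)
  ultimately show ?thesis unfolding sum_of_H_S_def by blast
qed

end

section \<open>Sections of epimorphisms\<close>

locale odd_zl_module_epi = N: odd_zl_module l N + P: odd_zl_module l P
  for l and N :: "('c, 'd) mackey" and P :: "('e, 'f) mackey" +
  fixes g :: "('c \<Rightarrow> 'e) \<times> ('d \<Rightarrow> 'f)"
  assumes g_hom: "mackey_hom N P g" and g_surj: "mackey_surj N P g"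
begin

sublocale g1: group_hom "theta N" "theta P" "fst g"
  using g_hom by (simp add: group_hom_def group_hom_axioms_def N.Th.is_group P.Th.is_group mackey_hom_def)

sublocale g2: group_hom "bullet N" "bullet P" "snd g"
  using g_hom by (simp add: group_hom_def group_hom_axioms_def N.Bu.is_group P.Bu.is_group mackey_hom_def)

lemma g_tw: "x \<in> carrier (theta N) \<Longrightarrow> fst g (tw N x) = tw P (fst g x)"
  and g_res: "y \<in> carrier (bullet N) \<Longrightarrow> fst g (res N y) = res P (snd g y)"
  using g_hom by (auto simp: mackey_hom_def)

lemma minus_part_lift:
  assumes a: "a \<in> P.minus_part"
  obtains m where "m \<in> N.minus_part" "fst g m = a"
proof -
  have a': "a \<in> carrier (theta P)" "tw P a = inv\<^bsub>theta P\<^esub> a" using P.minus_partD[OF a] by auto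
  have "a \<in> fst g ` carrier (theta N)" using a' g_surj by (simp add: mackey_surj_def)
  then obtain m0 where m0: "m0 \<in> carrier (theta N)" "fst g m0 = a" by blast
  define u where "u = m0 \<otimes>\<^bsub>theta N\<^esub> inv\<^bsub>theta N\<^esub> (tw N m0)"
  have u: "u \<in> carrier (theta N)" using m0 by (simp add: u_def)
  have "tw N u = inv\<^bsub>theta N\<^esub> u"
    using m0 N.tw_tw by (simp add: u_def N.Th.inv_mult N.Th.m_comm)
  then have u_minus: "u \<in> N.minus_part" using u by (simp add: N.minus_part_def)
  have "fst g u = a \<otimes>\<^bsub>theta P\<^esub> a" using m0 a' g_tw by (simp add: u_def)
  then have "fst g (u [^]\<^bsub>theta N\<^esub> ((int l + 1) div 2))
      = (a \<otimes>\<^bsub>theta P\<^esub> a) [^]\<^bsub>theta P\<^esub> ((int l + 1) div 2)"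
    using u by (simp add: g1.hom_int_pow)
  also have "\<dots> = a" by (rule P.Th.pow_half_square[OF a'(1) P.theta_exp[OF a'(1)] P.odd])
  finally have "fst g (u [^]\<^bsub>theta N\<^esub> ((int l + 1) div 2)) = a" .
  moreover have "u [^]\<^bsub>theta N\<^esub> ((int l + 1) div 2) \<in> N.minus_part"
    by (rule N.Th.subgroup_int_pow_closed[OF N.minus_part_subgroup u_minus])
  ultimately show ?thesis using that by blast
qed

context
  fixes I :: "('p + 'q) set" and \<alpha> :: "'p \<Rightarrow> 'c" and \<beta> :: "'q \<Rightarrow> 'd"
    and \<alpha>' :: "'p \<Rightarrow> 'e" and \<beta>' :: "'q \<Rightarrow> 'f"
  assumes \<alpha>: "\<And>a. Inl a \<in> I \<Longrightarrow> \<alpha> a \<in> N.minus_part \<and> fst g (\<alpha> a) = \<alpha>' a"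
    and \<beta>: "\<And>b. Inr b \<in> I \<Longrightarrow> \<beta> b \<in> carrier (bullet N) \<and> snd g (\<beta> b) = \<beta>' b"
begin

lemma lincomb_theta_natural:
  assumes "x \<in> carrier (sum_group I (\<lambda>i. zmod_group l))"
  shows "fst g (N.lincomb_theta I \<alpha> \<beta> x) = P.lincomb_theta I \<alpha>' \<beta>' x"
proof -
  have fin: "finite {i \<in> I. x i \<noteq> 0}" using assms by (simp add: carrier_sum_zmod_group[OF N.l_pos])
  have gen: "i \<in> I \<Longrightarrow> N.gen_theta \<alpha> \<beta> i \<in> carrier (theta N)" for i
    by (rule N.gen_theta_carrier) (use \<alpha> \<beta> in auto)
  have "fst g (N.lincomb_theta I \<alpha> \<beta> x)
      = gfinprod (theta P) (\<lambda>i. fst g (N.gen_theta \<alpha> \<beta> i [^]\<^bsub>theta N\<^esub> x i)) I"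
    unfolding N.lincomb_theta_def
    by (rule hom_gfinprod[OF N.theta_comm_group P.theta_comm_group g1.homh])
      (use gen finite_support_pow[OF fin] in auto)
  also have "\<dots> = P.lincomb_theta I \<alpha>' \<beta>' x"
  proof -
    have "fst g (N.gen_theta \<alpha> \<beta> i [^]\<^bsub>theta N\<^esub> x i) = P.gen_theta \<alpha>' \<beta>' i [^]\<^bsub>theta P\<^esub> x i"
      if "i \<in> I" for i
      using that \<alpha> \<beta> g_res N.minus_partD by (cases i) (auto simp: g1.hom_int_pow)
    moreover have "(\<lambda>i. fst g (N.gen_theta \<alpha> \<beta> i [^]\<^bsub>theta N\<^esub> x i)) \<in> I \<rightarrow> carrier (theta P)"
      using gen by simp
    ultimately show ?thesis
      unfolding P.lincomb_theta_def by (intro P.Th.gfinprod_cong) (auto simp: simp_implies_def)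
  qed
  finally show ?thesis .
qed

lemma lincomb_bullet_natural:
  assumes "y \<in> carrier (sum_group I (\<lambda>i. bullet (SH_family l i)))"
  shows "snd g (N.lincomb_bullet I \<beta> y) = P.lincomb_bullet I \<beta>' y"
proof -
  have fin: "finite {i \<in> I. y i \<noteq> 0}" using assms by (simp add: carrier_sum_bullet_SH_family[OF N.l_pos])
  have gen: "i \<in> I \<Longrightarrow> N.gen_bullet \<beta> i \<in> carrier (bullet N)" for i
    by (rule N.gen_bullet_carrier[where \<alpha>=\<alpha>]) (use \<alpha> \<beta> in auto)
  have "snd g (N.lincomb_bullet I \<beta> y)
      = gfinprod (bullet P) (\<lambda>i. snd g (N.gen_bullet \<beta> i [^]\<^bsub>bullet N\<^esub> y i)) I"
    unfolding N.lincomb_bullet_def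
    by (rule hom_gfinprod[OF N.bullet_comm_group P.bullet_comm_group g2.homh])
      (use gen finite_support_pow[OF fin] in auto)
  also have "\<dots> = P.lincomb_bullet I \<beta>' y"
  proof -
    have "snd g (N.gen_bullet \<beta> i [^]\<^bsub>bullet N\<^esub> y i) = P.gen_bullet \<beta>' i [^]\<^bsub>bullet P\<^esub> y i"
      if "i \<in> I" for i
      using that \<beta> by (cases i) (auto simp: g2.hom_int_pow)
    moreover have "(\<lambda>i. snd g (N.gen_bullet \<beta> i [^]\<^bsub>bullet N\<^esub> y i)) \<in> I \<rightarrow> carrier (bullet P)"
      using gen by simp
    ultimately show ?thesis
      unfolding P.lincomb_bullet_def by (intro P.Bu.gfinprod_cong) (auto simp: simp_implies_def)
  qed
  finally show ?thesis .
qed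

end

lemma generators_lift:
  assumes "\<And>a. Inl a \<in> I \<Longrightarrow> a \<in> P.minus_part" "\<And>b. Inr b \<in> I \<Longrightarrow> b \<in> carrier (bullet P)"
  obtains \<alpha> \<beta> where "\<And>a. Inl a \<in> I \<Longrightarrow> \<alpha> a \<in> N.minus_part \<and> fst g (\<alpha> a) = id a"
    "\<And>b. Inr b \<in> I \<Longrightarrow> \<beta> b \<in> carrier (bullet N) \<and> snd g (\<beta> b) = id b"
proof -
  have "\<forall>a. \<exists>m. Inl a \<in> I \<longrightarrow> m \<in> N.minus_part \<and> fst g m = id a"
    using minus_part_lift assms(1) by (metis id_apply)
  then obtain \<alpha> where "\<forall>a. Inl a \<in> I \<longrightarrow> \<alpha> a \<in> N.minus_part \<and> fst g (\<alpha> a) = id a"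
    by (metis choice)
  moreover have "\<exists>n. Inr b \<in> I \<longrightarrow> n \<in> carrier (bullet N) \<and> snd g n = id b" for b
  proof (cases "Inr b \<in> I")
    case True
    then have "b \<in> snd g ` carrier (bullet N)" using assms(2) g_surj by (simp add: mackey_surj_def)
    then show ?thesis by auto
  qed simp
  then obtain \<beta> where "\<forall>b. Inr b \<in> I \<longrightarrow> \<beta> b \<in> carrier (bullet N) \<and> snd g (\<beta> b) = id b"
    by (metis choice)
  ultimately show ?thesis using that by blast
qed

theorem epi_splits: "ses_splits N P g"
proof -
  obtain I :: "('e + 'f) set" where I: "\<And>a. Inl a \<in> I \<Longrightarrow> a \<in> P.minus_part"
    "\<And>b. Inr b \<in> I \<Longrightarrow> b \<in> carrier (bullet P)"
    and bij: "bij_betw (P.lincomb_theta I id id) (carrier (theta (mackey_sum I (SH_family l)))) (carrier (theta P))"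
      "bij_betw (P.lincomb_bullet I id) (carrier (bullet (mackey_sum I (SH_family l)))) (carrier (bullet P))"
    using P.exists_SH_decomposition by blast
  obtain \<alpha> \<beta> where \<alpha>: "\<And>a. Inl a \<in> I \<Longrightarrow> \<alpha> a \<in> N.minus_part \<and> fst g (\<alpha> a) = id a"
    and \<beta>: "\<And>b. Inr b \<in> I \<Longrightarrow> \<beta> b \<in> carrier (bullet N) \<and> snd g (\<beta> b) = id b"
    using generators_lift[OF I] by blast
  let ?S = "mackey_sum I (SH_family l)"
  define j where "j = (inv_into (carrier (theta ?S)) (P.lincomb_theta I id id),
                       inv_into (carrier (bullet ?S)) (P.lincomb_bullet I id))"
  have j: "mackey_hom P ?S j"
    using P.lincomb_mackey_iso[OF I bij] unfolding j_def mackey_iso_def by blast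
  have lift: "mackey_hom ?S N (N.lincomb_theta I \<alpha> \<beta>, N.lincomb_bullet I \<beta>)"
    by (rule N.lincomb_mackey_hom) (use \<alpha> \<beta> in auto)
  define s where "s = (N.lincomb_theta I \<alpha> \<beta> \<circ> fst j, N.lincomb_bullet I \<beta> \<circ> snd j)"
  have "mackey_hom P N s"
    using mackey_hom_comp[OF j lift] by (simp add: s_def)
  moreover have "fst g (fst s z) = z" if "z \<in> carrier (theta P)" for z
  proof -
    have "fst j z \<in> carrier (sum_group I (\<lambda>i. zmod_group l))" "P.lincomb_theta I id id (fst j z) = z"
      using that bij_betw_apply[OF bij_betw_inv_into[OF bij(1)]] bij_betw_inv_into_right[OF bij(1)]
      by (simp_all add: j_def)
    then show ?thesis
      using lincomb_theta_natural[where I=I and \<alpha>=\<alpha> and \<beta>=\<beta> and \<alpha>'=id and \<beta>'=id, OF \<alpha> \<beta>]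
      by (simp add: s_def)
  qed
  moreover have "snd g (snd s z) = z" if "z \<in> carrier (bullet P)" for z
  proof -
    have "snd j z \<in> carrier (sum_group I (\<lambda>i. bullet (SH_family l i)))" "P.lincomb_bullet I id (snd j z) = z"
      using that bij_betw_apply[OF bij_betw_inv_into[OF bij(2)]] bij_betw_inv_into_right[OF bij(2)]
      by (simp_all add: j_def)
    then show ?thesis
      using lincomb_bullet_natural[where I=I and \<alpha>=\<alpha> and \<beta>=\<beta> and \<alpha>'=id and \<beta>'=id, OF \<alpha> \<beta>]
      by (simp add: s_def)
  qed
  ultimately show ?thesis unfolding ses_splits_def by blast
qed

end

lemma lifts_through_if_splits:
  assumes "ses_splits N P g" "mackey_hom M P f"
  shows "lifts_through M N f g"
proof -
  obtain s where s: "mackey_hom P N s" "\<forall>z\<in>carrier (theta P). fst g (fst s z) = z"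
    "\<forall>z\<in>carrier (bullet P). snd g (snd s z) = z"
    using assms(1) unfolding ses_splits_def by blast
  have "fst f x \<in> carrier (theta P)" if "x \<in> carrier (theta M)" for x
    using assms(2) that by (auto simp: mackey_hom_def hom_def)
  moreover have "snd f y \<in> carrier (bullet P)" if "y \<in> carrier (bullet M)" for y
    using assms(2) that by (auto simp: mackey_hom_def hom_def)
  ultimately show ?thesis
    unfolding lifts_through_def using mackey_hom_comp[OF assms(2) s(1)] s(2,3)
    by (intro exI[of _ "(fst s \<circ> fst f, snd s \<circ> snd f)"]) auto
qed

lemma zl_module_epi_splits:
  assumes "Factorial_Ring.prime l" "odd l" "zl_module l N" "zl_module l P"
    and "mackey_hom N P g" "mackey_surj N P g"
  shows "ses_splits N P g"
proof -
  interpret odd_zl_module_epi l N P g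
    using assms by (simp add: odd_zl_module_epi_def odd_zl_module_epi_axioms_def odd_zl_module_def)
  show ?thesis by (rule epi_splits)
qed

theorem proposition3p5:
  fixes l :: nat
  assumes "Factorial_Ring.prime l" and "odd l"
  shows "(\<forall>M :: ('a, 'b) mackey. zl_module l M \<longrightarrow> sum_of_H_S l M) \<and>
         (\<forall>(M :: ('a, 'b) mackey) (N :: ('c, 'd) mackey) (P :: ('e, 'f) mackey) g f.
            zl_module l M \<and> zl_module l N \<and> zl_module l P \<and>
            mackey_hom N P g \<and> mackey_surj N P g \<and> mackey_hom M P f
            \<longrightarrow> lifts_through M N f g) \<and>
         (\<forall>(A :: ('g, 'h) mackey) (B :: ('i, 'j) mackey) (C :: ('k, 'm) mackey) f g.
            zl_module l A \<and> zl_module l B \<and> zl_module l C \<and> short_exact A B C f g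
            \<longrightarrow> ses_splits B C g)"
proof (intro conjI allI impI)
  fix M :: "('a, 'b) mackey"
  assume "zl_module l M"
  then interpret odd_zl_module l M using assms by (simp add: odd_zl_module_def)
  show "sum_of_H_S l M" by (rule sum_of_H_S)
next
  fix M :: "('a, 'b) mackey" and N :: "('c, 'd) mackey" and P :: "('e, 'f) mackey" and g f
  assume "zl_module l M \<and> zl_module l N \<and> zl_module l P \<and>
    mackey_hom N P g \<and> mackey_surj N P g \<and> mackey_hom M P f"
  then show "lifts_through M N f g"
    using zl_module_epi_splits[OF assms] lifts_through_if_splits by blast
next
  fix A :: "('g, 'h) mackey" and B :: "('i, 'j) mackey" and C :: "('k, 'm) mackey" and f g
  assume "zl_module l A \<and> zl_module l B \<and> zl_module l C \<and> short_exact A B C f g"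
  then show "ses_splits B C g"
    using zl_module_epi_splits[OF assms, of B C g] by (simp add: short_exact_def)
qed

end
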